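(* Let $(\mathcal X,\mathcal B,\pi)$ be a measure space with $\pi$ $\sigma$-finite, $r$ measurable, $2\le K<\infty$, and the noise stationary: $\{\varepsilon(x)\}$ a real-valued random field with $\varepsilon(x)\overset d=\varepsilon$ for all $x$, for some random variable $\varepsilon$; let $\varepsilon_1,\dots,\varepsilon_K$ be i.i.d. copies independent of $X_1,\dots,X_K$, which are i.i.d. with density $p\in\mathcal P_\pi$. Set $\tilde p_j:=e^{r(X_j)+\varepsilon_j(X_j)}/\sum_{i=1}^Ke^{r(X_i)+\varepsilon_i(X_i)}$. Then for every measurable $B\subset\mathcal X$, $$\mathbb S_p(B)=\mathbb E\Bigl[\sum_{j=1}^K\tilde p_j\,\mathbf 1_B(X_j)\Bigr].$$
   Context: $\mathcal P_\pi$ = probability densities w.r.t. $\pi$. $H^K_p(x):=\mathbb E\bigl[K e^{r(x)+\varepsilon(x)}/(e^{r(x)+\varepsilon(x)}+\sum_{k=1}^{K-1}e^{r(X_k)+\varepsilon_k(X_k)})\bigr]$ with $X_k$ i.i.d. with density $p$ independent of the noise copies; $S_p(x):=p(x)H^K_p(x)$ and $\mathbb S_p(B):=\int_BS_p(x)\,\pi(dx)$. *)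

theory Defs
  imports "HOL-Probability.Probability"
begin

definition is_density :: "'a measure \<Rightarrow> ('a \<Rightarrow> real) \<Rightarrow> bool" where
  "is_density \<pi> p \<longleftrightarrow> p \<in> borel_measurable \<pi> \<and> (\<forall>x\<in>space \<pi>. 0 \<le> p x)
     \<and> (\<integral>\<^sup>+ x. ennreal (p x) \<partial>\<pi>) = 1"

text \<open>Canonical model: the noise field is e :: 'w => 'a => real on the probability space N;
  one sample = (noise copy, point) drawn from N (x) (density pi p).  Independent copies are
  coordinates of a product measure.\<close>
definition sample_space :: "'w measure \<Rightarrow> 'a measure \<Rightarrow> ('a \<Rightarrow> real) \<Rightarrow> ('w \<times> 'a) measure" where
  "sample_space N \<pi> p = N \<Otimes>\<^sub>M density \<pi> (\<lambda>x. ennreal (p x))"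

text \<open>H^K_p(x): eps is a fresh noise copy (first component), X_1..X_{K-1} with their noise
  copies eps_k are the K-1 coordinates of the product.\<close>
definition H :: "('a \<Rightarrow> real) \<Rightarrow> ('w \<Rightarrow> 'a \<Rightarrow> real) \<Rightarrow> 'w measure \<Rightarrow> 'a measure
                  \<Rightarrow> ('a \<Rightarrow> real) \<Rightarrow> nat \<Rightarrow> 'a \<Rightarrow> real" where
  "H r e N \<pi> p K x =
     (\<integral> z. real K * exp (r x + e (fst z) x) /
             (exp (r x + e (fst z) x) +
              (\<Sum>k<K - 1. exp (r (snd (snd z k)) + e (fst (snd z k)) (snd (snd z k)))))
      \<partial>(N \<Otimes>\<^sub>M (\<Pi>\<^sub>M k\<in>{..<K - 1}. sample_space N \<pi> p)))"

definition S :: "('a \<Rightarrow> real) \<Rightarrow> ('w \<Rightarrow> 'a \<Rightarrow> real) \<Rightarrow> 'w measure \<Rightarrow> 'a measure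
                  \<Rightarrow> ('a \<Rightarrow> real) \<Rightarrow> nat \<Rightarrow> 'a \<Rightarrow> real" where
  "S r e N \<pi> p K x = p x * H r e N \<pi> p K x"

definition SS :: "('a \<Rightarrow> real) \<Rightarrow> ('w \<Rightarrow> 'a \<Rightarrow> real) \<Rightarrow> 'w measure \<Rightarrow> 'a measure
                  \<Rightarrow> ('a \<Rightarrow> real) \<Rightarrow> nat \<Rightarrow> 'a set \<Rightarrow> real" where
  "SS r e N \<pi> p K B = (\<integral>x\<in>B. S r e N \<pi> p K x \<partial>\<pi>)"

end

theory Submission
  imports Defs
begin

text \<open>The \<open>K\<close> samples \<open>(\<epsilon>\<^sub>j, X\<^sub>j)\<close> are i.i.d., so the softmax weights are exchangeable: swapping
  coordinate \<open>j\<close> with the last one shows that all \<open>K\<close> summands of the right-hand side have the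
  same expectation. In the last summand, integrating out the other \<open>K - 1\<close> samples first leaves
  \<open>H\<^sup>K\<^sub>p(X)/K\<close> (the fresh noise copy in \<open>H\<close> being the noise of the last sample), and integrating
  that over \<open>X \<sim> p\<close> restricted to \<open>B\<close> gives \<open>\<bbbS>\<^sub>p(B)/K\<close>.\<close>

lemma nn_integral_PiM_permute:
  assumes "prob_space M" and "bij_betw f I I"
    and [measurable]: "g \<in> borel_measurable (\<Pi>\<^sub>M i\<in>I. M)"
  shows "(\<integral>\<^sup>+ z. g (\<lambda>i\<in>I. z (f i)) \<partial>(\<Pi>\<^sub>M i\<in>I. M)) = (\<integral>\<^sup>+ z. g z \<partial>(\<Pi>\<^sub>M i\<in>I. M))"
proof -
  have f: "inj_on f I" "f \<in> I \<rightarrow> I"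
    using assms(2) by (auto simp: bij_betw_def)
  have reindex: "(\<lambda>z. \<lambda>i\<in>I. z (f i)) \<in> measurable (\<Pi>\<^sub>M i\<in>I. M) (\<Pi>\<^sub>M i\<in>I. M)"
    using f by (intro measurable_restrict measurable_component_singleton) auto
  have "distr (\<Pi>\<^sub>M i\<in>I. M) (\<Pi>\<^sub>M i\<in>I. M) (\<lambda>z. \<lambda>i\<in>I. z (f i)) = (\<Pi>\<^sub>M i\<in>I. M)"
    using distr_PiM_reindex[of I "\<lambda>_. M" f I] f assms(1) by simp
  then show ?thesis
    using nn_integral_distr[OF reindex, of g] by simp
qed

lemma nn_integral_softmax_exchangeable:
  fixes W h :: "'b \<Rightarrow> real"
  assumes "prob_space M"
    and [measurable]: "W \<in> borel_measurable M" "h \<in> borel_measurable M"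
    and W_pos: "\<And>q. 0 < W q" and h_nonneg: "\<And>q. 0 \<le> h q"
  shows "(\<integral>\<^sup>+ z. ennreal (\<Sum>j<Suc n. W (z j) / (\<Sum>i<Suc n. W (z i)) * h (z j)) \<partial>(\<Pi>\<^sub>M j\<in>{..<Suc n}. M))
    = of_nat (Suc n) * (\<integral>\<^sup>+ q. ennreal (h q) *
        (\<integral>\<^sup>+ y. ennreal (W q / (W q + (\<Sum>i<n. W (y i)))) \<partial>(\<Pi>\<^sub>M i\<in>{..<n}. M)) \<partial>M)"
proof -
  interpret product_sigma_finite "\<lambda>_. M"
    using assms(1) by (simp add: product_sigma_finite_def prob_space_imp_sigma_finite)
  define P where "P = (\<Pi>\<^sub>M j\<in>{..<Suc n}. M)"
  define G where "G j z = W (z j) / (\<Sum>i<Suc n. W (z i)) * h (z j)" for j z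
  have G_nonneg: "0 \<le> G j z" for j z
    unfolding G_def using W_pos h_nonneg
    by (intro mult_nonneg_nonneg divide_nonneg_nonneg sum_nonneg) (auto intro: less_imp_le)
  have G_measurable[measurable]: "G j \<in> borel_measurable P" if "j < Suc n" for j
  proof -
    have [measurable]: "(\<lambda>z. z i) \<in> measurable P M" if "i < Suc n" for i
      unfolding P_def using that by (intro measurable_component_singleton) simp
    show ?thesis
      unfolding G_def using that by measurable
  qed
  have exchange: "(\<integral>\<^sup>+ z. G j z \<partial>P) = (\<integral>\<^sup>+ z. G n z \<partial>P)" if j: "j < Suc n" for j
  proof -
    define f where "f = id (j := n, n := j)"
    have f_bij: "bij_betw f {..<Suc n} {..<Suc n}"
      using j by (intro bij_betwI[where g = f]) (auto simp: f_def)
    have "G n (\<lambda>i\<in>{..<Suc n}. z (f i)) = G j z" for z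
    proof -
      have "(\<Sum>i<Suc n. W (z (f i))) = (\<Sum>i<Suc n. W (z i))"
        using sum.reindex_bij_betw[OF f_bij, of "\<lambda>i. W (z i)"] .
      then show ?thesis
        unfolding G_def by (simp add: f_def)
    qed
    moreover have "(\<lambda>z. ennreal (G n z)) \<in> borel_measurable P"
      by measurable
    ultimately show ?thesis
      using nn_integral_PiM_permute[OF assms(1) f_bij, of "\<lambda>z. ennreal (G n z)"]
      unfolding P_def by simp
  qed
  have last_coordinate: "(\<integral>\<^sup>+ z. G n z \<partial>P) = (\<integral>\<^sup>+ q. ennreal (h q) *
        (\<integral>\<^sup>+ y. ennreal (W q / (W q + (\<Sum>i<n. W (y i)))) \<partial>(\<Pi>\<^sub>M i\<in>{..<n}. M)) \<partial>M)"
    (is "_ = ?share")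
  proof -
    have "(\<integral>\<^sup>+ z. G n z \<partial>P) = (\<integral>\<^sup>+ q. \<integral>\<^sup>+ y. G n (y(n := q)) \<partial>(\<Pi>\<^sub>M i\<in>{..<n}. M) \<partial>M)"
      unfolding P_def lessThan_Suc
      by (rule product_nn_integral_insert_rev) (use G_measurable[of n] in \<open>auto simp: P_def lessThan_Suc\<close>)
    also have "\<dots> = (\<integral>\<^sup>+ q. \<integral>\<^sup>+ y. ennreal (h q) * ennreal (W q / (W q + (\<Sum>i<n. W (y i)))) \<partial>(\<Pi>\<^sub>M i\<in>{..<n}. M) \<partial>M)"
      by (intro nn_integral_cong, subst ennreal_mult'[symmetric])
        (simp_all add: G_def lessThan_Suc add.commute mult.commute h_nonneg)
    also have "\<dots> = ?share"
      by (intro nn_integral_cong nn_integral_cmult) measurable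
    finally show ?thesis .
  qed
  have "(\<integral>\<^sup>+ z. ennreal (\<Sum>j<Suc n. G j z) \<partial>P) = (\<integral>\<^sup>+ z. (\<Sum>j<Suc n. ennreal (G j z)) \<partial>P)"
    using G_nonneg by (intro nn_integral_cong sum_ennreal[symmetric])
  also have "\<dots> = (\<Sum>j<Suc n. \<integral>\<^sup>+ z. G j z \<partial>P)"
    by (rule nn_integral_sum) measurable
  also have "\<dots> = (\<Sum>j<Suc n. \<integral>\<^sup>+ z. G n z \<partial>P)"
    by (intro sum.cong refl exchange) simp
  also have "\<dots> = of_nat (Suc n) * ?share"
    unfolding last_coordinate by (subst sum_constant) simp
  finally show ?thesis
    by (simp only: P_def G_def)
qed

lemma nn_integral_pair_regroup:
  assumes "sigma_finite_measure N" "sigma_finite_measure D" "sigma_finite_measure Q"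
    and [measurable]: "f \<in> borel_measurable ((N \<Otimes>\<^sub>M D) \<Otimes>\<^sub>M Q)"
  shows "(\<integral>\<^sup>+ x. \<integral>\<^sup>+ z. f ((fst z, x), snd z) \<partial>(N \<Otimes>\<^sub>M Q) \<partial>D)
    = (\<integral>\<^sup>+ q. \<integral>\<^sup>+ y. f (q, y) \<partial>Q \<partial>(N \<Otimes>\<^sub>M D))"
proof -
  interpret N: sigma_finite_measure N by fact
  interpret D: sigma_finite_measure D by fact
  interpret Q: sigma_finite_measure Q by fact
  interpret ND: pair_sigma_finite N D ..
  have "(\<integral>\<^sup>+ z. f ((fst z, x), snd z) \<partial>(N \<Otimes>\<^sub>M Q)) = (\<integral>\<^sup>+ \<omega>. \<integral>\<^sup>+ y. f ((\<omega>, x), y) \<partial>Q \<partial>N)"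
    if "x \<in> space D" for x
  proof -
    have "(\<lambda>z. f ((fst z, x), snd z)) \<in> borel_measurable (N \<Otimes>\<^sub>M Q)"
      using that by measurable
    from Q.nn_integral_fst[OF this] show ?thesis
      by simp
  qed
  then have "(\<integral>\<^sup>+ x. \<integral>\<^sup>+ z. f ((fst z, x), snd z) \<partial>(N \<Otimes>\<^sub>M Q) \<partial>D)
      = (\<integral>\<^sup>+ x. \<integral>\<^sup>+ \<omega>. \<integral>\<^sup>+ y. f ((\<omega>, x), y) \<partial>Q \<partial>N \<partial>D)"
    by (intro nn_integral_cong) simp
  also have "\<dots> = (\<integral>\<^sup>+ q. \<integral>\<^sup>+ y. f (q, y) \<partial>Q \<partial>(N \<Otimes>\<^sub>M D))"
    using ND.nn_integral_snd[OF Q.borel_measurable_nn_integral_fst[OF assms(4)]] by simp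
  finally show ?thesis .
qed

lemma prob_space_density:
  assumes "is_density \<pi> p"
  shows "prob_space (density \<pi> p)"
proof
  have "emeasure (density \<pi> p) (space (density \<pi> p)) = (\<integral>\<^sup>+ x. ennreal (p x) \<partial>\<pi>)"
    using assms by (auto simp: is_density_def emeasure_density intro!: nn_integral_cong)
  then show "emeasure (density \<pi> p) (space (density \<pi> p)) = 1"
    using assms by (simp add: is_density_def)
qed

lemma sets_sample_space[measurable_cong]: "sets (sample_space N \<pi> p) = sets (N \<Otimes>\<^sub>M \<pi>)"
  unfolding sample_space_def by (rule sets_pair_measure_cong) simp_all

locale noisy_sampling =
  fixes \<pi> :: "'a measure" and N :: "'w measure" and r :: "'a \<Rightarrow> real"
    and e :: "'w \<Rightarrow> 'a \<Rightarrow> real" and p :: "'a \<Rightarrow> real"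
  assumes prob_space_noise: "prob_space N"
    and r_measurable[measurable]: "r \<in> borel_measurable \<pi>"
    and e_measurable: "(\<lambda>(\<omega>, x). e \<omega> x) \<in> borel_measurable (N \<Otimes>\<^sub>M \<pi>)"
    and density: "is_density \<pi> p"
begin

definition weight :: "'w \<times> 'a \<Rightarrow> real" where
  "weight q = exp (r (snd q) + e (fst q) (snd q))"

lemma weight_pos: "0 < weight q"
  by (simp add: weight_def)

lemma weight_measurable[measurable]: "weight \<in> borel_measurable (sample_space N \<pi> p)"
proof -
  have [measurable]: "(\<lambda>q. e (fst q) (snd q)) \<in> borel_measurable (N \<Otimes>\<^sub>M \<pi>)"
    using e_measurable by (simp add: case_prod_beta')
  show ?thesis
    unfolding weight_def by measurable
qed

lemma prob_space_sample: "prob_space (sample_space N \<pi> p)"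
proof -
  interpret N: prob_space N by (rule prob_space_noise)
  interpret D: prob_space "density \<pi> p"
    using density by (rule prob_space_density)
  interpret pair_prob_space N "density \<pi> p" ..
  show ?thesis
    unfolding sample_space_def by (rule P.prob_space_axioms)
qed

definition weight_share :: "nat \<Rightarrow> 'w \<times> 'a \<Rightarrow> (nat \<Rightarrow> 'w \<times> 'a) \<Rightarrow> real" where
  "weight_share n q y = weight q / (weight q + (\<Sum>i<n. weight (y i)))"

lemma weight_share_nonneg: "0 \<le> weight_share n q y"
  unfolding weight_share_def
  by (intro divide_nonneg_nonneg add_nonneg_nonneg sum_nonneg less_imp_le[OF weight_pos])

lemma weight_share_le_1: "weight_share n q y \<le> 1"
proof -
  have "0 \<le> (\<Sum>i<n. weight (y i))"
    by (intro sum_nonneg less_imp_le[OF weight_pos])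
  then show ?thesis
    unfolding weight_share_def using weight_pos[of q] by (simp add: divide_le_eq_1)
qed

lemma weight_share_measurable[measurable]:
  "(\<lambda>(q, y). weight_share n q y)
    \<in> borel_measurable (sample_space N \<pi> p \<Otimes>\<^sub>M (\<Pi>\<^sub>M i\<in>{..<n}. sample_space N \<pi> p))"
proof -
  have [measurable]: "(\<lambda>y. y i) \<in> measurable (\<Pi>\<^sub>M i\<in>{..<n}. sample_space N \<pi> p) (sample_space N \<pi> p)"
    if "i < n" for i
    using that by (intro measurable_component_singleton) simp
  show ?thesis
    unfolding weight_share_def by measurable
qed

definition softmax_share :: "'a set \<Rightarrow> nat \<Rightarrow> ennreal" where
  "softmax_share B n = (\<integral>\<^sup>+ q. indicator B (snd q) *
     (\<integral>\<^sup>+ y. weight_share n q y \<partial>(\<Pi>\<^sub>M i\<in>{..<n}. sample_space N \<pi> p)) \<partial>sample_space N \<pi> p)"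

lemma integral_softmax_indicator:
  assumes [measurable]: "B \<in> sets \<pi>"
  shows "(\<integral> z. (\<Sum>j<Suc n. weight (z j) / (\<Sum>i<Suc n. weight (z i)) * indicator B (snd (z j)))
      \<partial>(\<Pi>\<^sub>M j\<in>{..<Suc n}. sample_space N \<pi> p)) = enn2real (of_nat (Suc n) * softmax_share B n)"
proof -
  have [measurable]: "(\<lambda>z. z j) \<in> measurable (\<Pi>\<^sub>M j\<in>{..<Suc n}. sample_space N \<pi> p) (sample_space N \<pi> p)"
    if "j < Suc n" for j
    using that by (intro measurable_component_singleton) simp
  have indicator_measurable: "(\<lambda>q. indicator B (snd q) :: real) \<in> borel_measurable (sample_space N \<pi> p)"
    by measurable
  have "(\<integral> z. (\<Sum>j<Suc n. weight (z j) / (\<Sum>i<Suc n. weight (z i)) * indicator B (snd (z j)))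
      \<partial>(\<Pi>\<^sub>M j\<in>{..<Suc n}. sample_space N \<pi> p)) = enn2real (\<integral>\<^sup>+ z.
        ennreal (\<Sum>j<Suc n. weight (z j) / (\<Sum>i<Suc n. weight (z i)) * indicator B (snd (z j)))
      \<partial>(\<Pi>\<^sub>M j\<in>{..<Suc n}. sample_space N \<pi> p))"
    by (intro integral_eq_nn_integral AE_I2 sum_nonneg mult_nonneg_nonneg divide_nonneg_nonneg)
      (auto intro: less_imp_le[OF weight_pos])
  also have "\<dots> = enn2real (of_nat (Suc n) * softmax_share B n)"
    using nn_integral_softmax_exchangeable[OF prob_space_sample weight_measurable indicator_measurable weight_pos]
    by (simp add: softmax_share_def weight_share_def ennreal_indicator)
  finally show ?thesis .
qed

lemma H_eq_integral_weight_share: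
  "H r e N \<pi> p (Suc n) x =
    real (Suc n) * (\<integral> z. weight_share n (fst z, x) (snd z) \<partial>(N \<Otimes>\<^sub>M (\<Pi>\<^sub>M i\<in>{..<n}. sample_space N \<pi> p)))"
  unfolding H_def weight_share_def weight_def
  by (subst integral_mult_right_zero[symmetric]) simp

lemma integral_weight_share_measurable:
  "(\<lambda>x. \<integral> z. weight_share n (fst z, x) (snd z) \<partial>(N \<Otimes>\<^sub>M (\<Pi>\<^sub>M i\<in>{..<n}. sample_space N \<pi> p)))
    \<in> borel_measurable \<pi>"
proof -
  interpret N: prob_space N by (rule prob_space_noise)
  interpret Q: prob_space "\<Pi>\<^sub>M i\<in>{..<n}. sample_space N \<pi> p"
    using prob_space_sample by (intro prob_space_PiM)
  interpret NQ: pair_prob_space N "\<Pi>\<^sub>M i\<in>{..<n}. sample_space N \<pi> p" ..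
  show ?thesis
    by (rule NQ.P.borel_measurable_lebesgue_integral) measurable
qed

lemma SS_eq_softmax_share:
  assumes [measurable]: "B \<in> sets \<pi>"
  shows "SS r e N \<pi> p (Suc n) B = enn2real (of_nat (Suc n) * softmax_share B n)"
proof -
  let ?Q = "\<Pi>\<^sub>M i\<in>{..<n}. sample_space N \<pi> p"
  let ?D = "density \<pi> p"
  interpret N: prob_space N by (rule prob_space_noise)
  interpret D: prob_space ?D
    using density by (rule prob_space_density)
  interpret Q: prob_space ?Q
    using prob_space_sample by (intro prob_space_PiM)
  interpret NQ: pair_prob_space N ?Q ..
  have p_measurable[measurable]: "p \<in> borel_measurable \<pi>" and p_nonneg: "\<And>x. x \<in> space \<pi> \<Longrightarrow> 0 \<le> p x"
    using density by (auto simp: is_density_def)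
  define h where "h x = (\<integral> z. weight_share n (fst z, x) (snd z) \<partial>(N \<Otimes>\<^sub>M ?Q))" for x
  have [measurable]: "h \<in> borel_measurable \<pi>"
    unfolding h_def by (rule integral_weight_share_measurable)
  have h_nonneg: "0 \<le> h x" for x
    unfolding h_def by (intro integral_nonneg_AE AE_I2 weight_share_nonneg)
  have ennreal_h: "ennreal (h x) = (\<integral>\<^sup>+ z. weight_share n (fst z, x) (snd z) \<partial>(N \<Otimes>\<^sub>M ?Q))"
    if "x \<in> space \<pi>" for x
  proof -
    have "(\<lambda>z. weight_share n (fst z, x) (snd z)) \<in> borel_measurable (N \<Otimes>\<^sub>M ?Q)"
      using that by measurable
    then have "integrable (N \<Otimes>\<^sub>M ?Q) (\<lambda>z. weight_share n (fst z, x) (snd z))"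
      by (intro NQ.P.integrable_const_bound[where B = 1] AE_I2) (simp_all add: weight_share_nonneg weight_share_le_1)
    then show ?thesis
      unfolding h_def by (rule nn_integral_eq_integral[symmetric]) (simp add: weight_share_nonneg)
  qed
  have "SS r e N \<pi> p (Suc n) B = (\<integral> x. p x *\<^sub>R (real (Suc n) * (indicator B x * h x)) \<partial>\<pi>)"
    unfolding SS_def S_def set_lebesgue_integral_def H_eq_integral_weight_share h_def
    by (simp add: mult_ac)
  also have "\<dots> = (\<integral> x. real (Suc n) * (indicator B x * h x) \<partial>?D)"
    using p_nonneg by (intro integral_density[symmetric] AE_I2) measurable
  also have "\<dots> = real (Suc n) * enn2real (\<integral>\<^sup>+ x. ennreal (indicator B x * h x) \<partial>?D)"
    using h_nonneg by (simp add: integral_eq_nn_integral)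
  also have "(\<integral>\<^sup>+ x. ennreal (indicator B x * h x) \<partial>?D)
      = (\<integral>\<^sup>+ x. \<integral>\<^sup>+ z. indicator B x * ennreal (weight_share n (fst z, x) (snd z)) \<partial>(N \<Otimes>\<^sub>M ?Q) \<partial>?D)"
  proof (rule nn_integral_cong)
    fix x assume "x \<in> space ?D"
    then have x[measurable]: "x \<in> space \<pi>"
      by simp
    have "(\<lambda>z. ennreal (weight_share n (fst z, x) (snd z))) \<in> borel_measurable (N \<Otimes>\<^sub>M ?Q)"
      by measurable
    then show "ennreal (indicator B x * h x)
        = (\<integral>\<^sup>+ z. indicator B x * ennreal (weight_share n (fst z, x) (snd z)) \<partial>(N \<Otimes>\<^sub>M ?Q))"
      by (simp add: ennreal_mult' ennreal_indicator ennreal_h[OF x] nn_integral_cmult)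
  qed
  also have "\<dots> = (\<integral>\<^sup>+ q. \<integral>\<^sup>+ y. indicator B (snd q) * ennreal (weight_share n q y) \<partial>?Q \<partial>sample_space N \<pi> p)"
  proof -
    have "(\<lambda>(q, y). indicator B (snd q) * ennreal (weight_share n q y))
        \<in> borel_measurable (sample_space N \<pi> p \<Otimes>\<^sub>M ?Q)"
      by measurable
    then show ?thesis
      using nn_integral_pair_regroup[OF N.sigma_finite_measure_axioms D.sigma_finite_measure_axioms
          Q.sigma_finite_measure_axioms, of "\<lambda>(q, y). indicator B (snd q) * ennreal (weight_share n q y)"]
      unfolding sample_space_def by simp
  qed
  also have "\<dots> = softmax_share B n"
    unfolding softmax_share_def
  proof (rule nn_integral_cong)
    fix q assume [measurable]: "q \<in> space (sample_space N \<pi> p)"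
    have "(\<lambda>y. ennreal (weight_share n q y)) \<in> borel_measurable ?Q"
      by measurable
    then show "(\<integral>\<^sup>+ y. indicator B (snd q) * ennreal (weight_share n q y) \<partial>?Q)
        = indicator B (snd q) * (\<integral>\<^sup>+ y. weight_share n q y \<partial>?Q)"
      by (rule nn_integral_cmult)
  qed
  finally show ?thesis
    by (simp add: enn2real_mult ennreal_of_nat_eq_real_of_nat del: of_nat_Suc)
qed

end

theorem corollary1:
  fixes \<pi> :: "'a measure" and N :: "'w measure" and r :: "'a \<Rightarrow> real"
    and e :: "'w \<Rightarrow> 'a \<Rightarrow> real" and p :: "'a \<Rightarrow> real" and K :: nat and B :: "'a set"
  assumes "sigma_finite_measure \<pi>"
    and "r \<in> borel_measurable \<pi>"
    and "2 \<le> K"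
    and "prob_space N"
    and "(\<lambda>(\<omega>, x). e \<omega> x) \<in> borel_measurable (N \<Otimes>\<^sub>M \<pi>)"
    and "\<exists>\<mu>. \<forall>x\<in>space \<pi>. distr N borel (\<lambda>\<omega>. e \<omega> x) = \<mu>"
    and "is_density \<pi> p"
    and "B \<in> sets \<pi>"
  shows "SS r e N \<pi> p K B =
    (\<integral> z. (\<Sum>j<K. exp (r (snd (z j)) + e (fst (z j)) (snd (z j))) /
                  (\<Sum>i<K. exp (r (snd (z i)) + e (fst (z i)) (snd (z i))))
                  * indicator B (snd (z j)))
       \<partial>(\<Pi>\<^sub>M j\<in>{..<K}. sample_space N \<pi> p))"
proof -
  interpret noisy_sampling \<pi> N r e p
    by (rule noisy_sampling.intro[OF assms(4,2,5,7)])
  obtain n where K: "K = Suc n"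
    using assms(3) by (cases K) auto
  have "SS r e N \<pi> p K B = enn2real (of_nat K * softmax_share B n)"
    unfolding K by (rule SS_eq_softmax_share[OF assms(8)])
  also have "\<dots> = (\<integral> z. (\<Sum>j<K. weight (z j) / (\<Sum>i<K. weight (z i)) * indicator B (snd (z j)))
      \<partial>(\<Pi>\<^sub>M j\<in>{..<K}. sample_space N \<pi> p))"
    unfolding K by (rule integral_softmax_indicator[OF assms(8), symmetric])
  finally show ?thesis
    by (simp add: weight_def)
qed

end
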